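(* Fix $m\ge2$. The functions $k(\ell)=\frac12\log(\ell)-\log\log(\ell)$ and $f(\ell)=\frac{\log(\ell)}{4\ell}-\frac{\log\log(\ell)}{\ell}$ satisfy, as $\ell\to\infty$, $$k(\ell)-2\ell f(\ell)\to\infty \qquad\text{and}\qquad \frac{\ell-2}{(2k(\ell)+2)(2m-1)^{2k(\ell)}}\to\infty .$$ Consequently, a random group in $\mathcal H\big(\frac{\log(\ell)}{4\ell}-\frac{\log\log(\ell)}{\ell}\big)$ is asymptotically almost surely isomorphic to $1$ or to $\mathbb Z/2\mathbb Z$.
   Context: All logarithms are base $2m-1$. The random group model $\mathcal H(f)$: for each length $\ell$, choose $(2m-1)^{\ell(\frac12-f(\ell))}$ relators (an integer count), independently and uniformly at random from the freely reduced words of length $\ell$ (not necessarily cyclically reduced) in $m$ generators and their inverses; the random group is the group so presented. "Asymptotically almost surely" means with probability tending to $1$ as $\ell\to\infty$. *)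

theory Defs
  imports "HOL-Algebra.Elementary_Groups" "HOL-Probability.Probability"
begin

(* Letters: generator index i (< m) and a flag: (i, True) = a_i, (i, False) = a_i^{-1} *)
type_synonym letter = "nat \<times> bool"

definition letters :: "nat \<Rightarrow> letter set" where
  "letters m = {0..<m} \<times> UNIV"

definition inv_letter :: "letter \<Rightarrow> letter" where
  "inv_letter x = (fst x, \<not> snd x)"

definition freely_reduced :: "letter list \<Rightarrow> bool" where
  "freely_reduced w \<longleftrightarrow> (\<forall>i. Suc i < length w \<longrightarrow> w ! Suc i \<noteq> inv_letter (w ! i))"

definition reduced_words :: "nat \<Rightarrow> nat \<Rightarrow> letter list set" where
  "reduced_words m l = {w. set w \<subseteq> letters m \<and> length w = l \<and> freely_reduced w}"

inductive_set pres_rel :: "nat \<Rightarrow> letter list set \<Rightarrow> (letter list \<times> letter list) set"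
  for m :: nat and R :: "letter list set" where
  refl: "set w \<subseteq> letters m \<Longrightarrow> (w, w) \<in> pres_rel m R"
| sym: "(u, v) \<in> pres_rel m R \<Longrightarrow> (v, u) \<in> pres_rel m R"
| trans: "(u, v) \<in> pres_rel m R \<Longrightarrow> (v, w) \<in> pres_rel m R \<Longrightarrow> (u, w) \<in> pres_rel m R"
| cancel: "set u \<subseteq> letters m \<Longrightarrow> set v \<subseteq> letters m \<Longrightarrow> x \<in> letters m \<Longrightarrow>
           (u @ [x, inv_letter x] @ v, u @ v) \<in> pres_rel m R"
| relator: "r \<in> R \<Longrightarrow> set r \<subseteq> letters m \<Longrightarrow> set u \<subseteq> letters m \<Longrightarrow> set v \<subseteq> letters m \<Longrightarrow>
           (u @ r @ v, u @ v) \<in> pres_rel m R"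

definition pres_group :: "nat \<Rightarrow> letter list set \<Rightarrow> letter list set monoid" where
  "pres_group m R =
     \<lparr>carrier = {w. set w \<subseteq> letters m} // pres_rel m R,
      monoid.mult = (\<lambda>A B. pres_rel m R `` {(SOME u. u \<in> A) @ (SOME v. v \<in> B)}),
      one = pres_rel m R `` {[]}\<rparr>"

definition num_relators :: "nat \<Rightarrow> (real \<Rightarrow> real) \<Rightarrow> nat \<Rightarrow> nat" where
  "num_relators m f l = nat \<lfloor>(2 * real m - 1) powr (real l * (1/2 - f (real l)))\<rfloor>"

(* distribution of the relator tuple: independent uniform choices = uniform on tuples *)
definition relator_tuples :: "nat \<Rightarrow> (real \<Rightarrow> real) \<Rightarrow> nat \<Rightarrow> letter list list pmf" where
  "relator_tuples m f l =
     pmf_of_set {rs. length rs = num_relators m f l \<and> set rs \<subseteq> reduced_words m l}"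

definition random_group_prob ::
    "nat \<Rightarrow> (real \<Rightarrow> real) \<Rightarrow> (letter list set monoid \<Rightarrow> bool) \<Rightarrow> nat \<Rightarrow> real" where
  "random_group_prob m f P l =
     measure_pmf.prob (relator_tuples m f l) {rs. P (pres_group m (set rs))}"

end

theory Submission
  imports Defs "HOL-Real_Asymp.Real_Asymp"
begin

text \<open>
  If two relators \<open>U x V\<close> and \<open>U y V\<close> differ in a single letter, then \<open>x = y\<close> in the group.
  Replacing the middle letter of an occurrence of \<open>a\<^sub>0 a\<^sub>0 a\<^sub>0\<close> by \<open>a\<^sub>i\<close>, and of
  \<open>a\<^sub>1 a\<^sub>0 a\<^sub>1\<close> by \<open>a\<^sub>0\<^sup>-\<^sup>1\<close>, keeps a word reduced; so if for every \<open>i\<close> some relator is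
  such a swap of another relator, all generators equal \<open>a\<^sub>0 = a\<^sub>0\<^sup>-\<^sup>1\<close> and the group is
  \<open>1\<close> or \<open>\<int>/2\<close>.

  To find these pairs, split the \<open>N\<close> relators into halves \<open>A\<close> and \<open>B\<close>. A reduced word of
  length \<open>l\<close> has about \<open>l/\<beta>\<^sup>3\<close> swaps (\<open>\<beta> = 2m - 1\<close>), so the swaps of \<open>A\<close> cover about
  \<open>|A| l/\<beta>\<^sup>3\<close> of the \<open>\<approx> \<beta>\<^sup>l\<close> words; concentration of the total number of swaps (Chebyshev)
  and a first-moment bound on the overlaps between swap sets (Markov) make this rigorous.
  Then \<open>B\<close> avoids all of them with probability about \<open>exp (-|A||B| l/\<beta>\<^sup>l\<^sup>+\<^sup>3)\<close>, which
  tends to \<open>0\<close> because \<open>N \<approx> \<beta>\<^sup>l\<^sup>/\<^sup>2 log\<^sub>\<beta> l \<cdot> l\<^sup>-\<^sup>1\<^sup>/\<^sup>4\<close> makes \<open>|A||B| l/\<beta>\<^sup>l\<close> grow like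
  \<open>\<surd>l (log l)\<^sup>2\<close>.
\<close>

section \<open>Groups given by presentations\<close>

lemma inv_letter_inv [simp]: "inv_letter (inv_letter x) = x"
  by (simp add: inv_letter_def)

lemma inv_letter_in_letters: "x \<in> letters m \<Longrightarrow> inv_letter x \<in> letters m"
  by (auto simp: inv_letter_def letters_def)

definition inv_word :: "letter list \<Rightarrow> letter list" where
  "inv_word w = rev (map inv_letter w)"

lemma inv_word_inv_word [simp]: "inv_word (inv_word w) = w"
  by (simp add: inv_word_def rev_map comp_def)

lemma set_inv_word_subset: "set w \<subseteq> letters m \<Longrightarrow> set (inv_word w) \<subseteq> letters m"
  by (auto simp: inv_word_def inv_letter_in_letters)

lemma pres_rel_letters: "(u, v) \<in> pres_rel m R \<Longrightarrow> set u \<subseteq> letters m \<and> set v \<subseteq> letters m"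
  by (induction rule: pres_rel.induct) (auto simp: inv_letter_in_letters)

lemma equiv_pres_rel: "equiv {w. set w \<subseteq> letters m} (pres_rel m R)"
proof -
  have "pres_rel m R \<subseteq> {w. set w \<subseteq> letters m} \<times> {w. set w \<subseteq> letters m}"
    using pres_rel_letters by fast
  then show ?thesis
    unfolding equiv_def refl_on_def sym_def trans_def
    by (auto intro: pres_rel.refl pres_rel.sym pres_rel.trans)
qed

lemma pres_rel_append:
  "(u, v) \<in> pres_rel m R \<Longrightarrow> set a \<subseteq> letters m \<Longrightarrow> set c \<subseteq> letters m
   \<Longrightarrow> (a @ u @ c, a @ v @ c) \<in> pres_rel m R"
proof (induction rule: pres_rel.induct)
  case (refl w) then show ?case by (intro pres_rel.refl) auto
next
  case (sym u v) then show ?case by (blast intro: pres_rel.sym)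
next
  case (trans u v w) then show ?case by (blast intro: pres_rel.trans)
next
  case (cancel u v x)
  have "((a @ u) @ [x, inv_letter x] @ (v @ c), (a @ u) @ (v @ c)) \<in> pres_rel m R"
    using cancel by (intro pres_rel.cancel) auto
  then show ?case by simp
next
  case (relator r u v)
  have "((a @ u) @ r @ (v @ c), (a @ u) @ (v @ c)) \<in> pres_rel m R"
    using relator by (intro pres_rel.relator) auto
  then show ?case by simp
qed

lemma pres_rel_append_left:
  "(u, v) \<in> pres_rel m R \<Longrightarrow> set a \<subseteq> letters m \<Longrightarrow> (a @ u, a @ v) \<in> pres_rel m R"
  using pres_rel_append[of u v m R a "[]"] by simp

lemma pres_rel_append_right:
  "(u, v) \<in> pres_rel m R \<Longrightarrow> set c \<subseteq> letters m \<Longrightarrow> (u @ c, v @ c) \<in> pres_rel m R"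
  using pres_rel_append[of u v m R "[]" c] by simp

lemma pres_rel_cancel_pair: "x \<in> letters m \<Longrightarrow> ([x, inv_letter x], []) \<in> pres_rel m R"
  using pres_rel.cancel[of "[]" m "[]" x R] by simp

lemma pres_rel_word_inv_word: "set w \<subseteq> letters m \<Longrightarrow> (w @ inv_word w, []) \<in> pres_rel m R"
proof (induction w)
  case Nil then show ?case by (auto intro: pres_rel.refl simp: inv_word_def)
next
  case (Cons x w)
  have x: "x \<in> letters m" using Cons by auto
  have "([x] @ (w @ inv_word w) @ [inv_letter x], [x] @ [] @ [inv_letter x]) \<in> pres_rel m R"
    using Cons x by (intro pres_rel_append) (auto simp: inv_letter_in_letters)
  moreover have "(x # w) @ inv_word (x # w) = [x] @ (w @ inv_word w) @ [inv_letter x]"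
    by (simp add: inv_word_def)
  ultimately show ?case using pres_rel_cancel_pair[OF x] by (auto intro: pres_rel.trans)
qed

lemma pres_rel_inv_word_word: "set w \<subseteq> letters m \<Longrightarrow> (inv_word w @ w, []) \<in> pres_rel m R"
  using pres_rel_word_inv_word[of "inv_word w" m R] set_inv_word_subset[of w m] by simp

lemma pres_rel_letter_in_relator:
  assumes "u @ [z] @ v \<in> R" "set (u @ [z] @ v) \<subseteq> letters m"
  shows "([z], inv_word u @ inv_word v) \<in> pres_rel m R"
proof -
  have u: "set u \<subseteq> letters m" and v: "set v \<subseteq> letters m" and z: "z \<in> letters m"
    using assms(2) by auto
  have iu: "set (inv_word u) \<subseteq> letters m" and iv: "set (inv_word v) \<subseteq> letters m"
    using u v set_inv_word_subset by auto
  have "((inv_word u @ u) @ ([z] @ v @ inv_word v), [] @ ([z] @ v @ inv_word v)) \<in> pres_rel m R"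
    using pres_rel_inv_word_word[OF u] u v iv z by (intro pres_rel_append_right) auto
  moreover have "([z] @ (v @ inv_word v), [z] @ []) \<in> pres_rel m R"
    using pres_rel_word_inv_word[OF v] z by (intro pres_rel_append_left) auto
  moreover have "(inv_word u @ (u @ [z] @ v) @ inv_word v, inv_word u @ inv_word v) \<in> pres_rel m R"
    using pres_rel.relator[OF assms iu iv] by simp
  ultimately show ?thesis
    by (metis append_Nil append_Cons append_assoc pres_rel.trans pres_rel.sym)
qed

lemma pres_rel_swapped_relators:
  assumes "u @ [x] @ v \<in> R" "u @ [y] @ v \<in> R"
    and "set (u @ [x] @ v) \<subseteq> letters m" "set (u @ [y] @ v) \<subseteq> letters m"
  shows "([x], [y]) \<in> pres_rel m R"
  using pres_rel_letter_in_relator[OF assms(1,3)] pres_rel_letter_in_relator[OF assms(2,4)]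
  by (blast intro: pres_rel.trans pres_rel.sym)

lemma pres_rel_inv_letters:
  assumes "([x], [y]) \<in> pres_rel m R"
  shows "([inv_letter x], [inv_letter y]) \<in> pres_rel m R"
proof -
  have x: "x \<in> letters m" and y: "y \<in> letters m" using pres_rel_letters[OF assms] by auto
  have "([inv_letter x] @ [y, inv_letter y] @ [], [inv_letter x] @ []) \<in> pres_rel m R"
    using x y by (intro pres_rel.cancel) (auto simp: inv_letter_in_letters)
  moreover have "([inv_letter x] @ [y] @ [inv_letter y], [inv_letter x] @ [x] @ [inv_letter y])
      \<in> pres_rel m R"
    using x y by (intro pres_rel_append pres_rel.sym[OF assms]) (auto simp: inv_letter_in_letters)
  moreover have "([] @ [inv_letter x, inv_letter (inv_letter x)] @ [inv_letter y], [] @ [inv_letter y])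
      \<in> pres_rel m R"
    using x y by (intro pres_rel.cancel) (auto simp: inv_letter_in_letters)
  ultimately show ?thesis by (auto intro: pres_rel.trans pres_rel.sym)
qed

lemma pres_rel_square_trivial:
  assumes "([(0, True)], [(0, False)]) \<in> pres_rel m R" and "(0::nat, True) \<in> letters m"
  shows "([(0, True), (0, True)], []) \<in> pres_rel m R"
proof -
  have "([(0, True)] @ [(0, True)], [(0, True)] @ [(0, False)]) \<in> pres_rel m R"
    using assms by (intro pres_rel_append_left) auto
  moreover have "([(0, True), inv_letter (0, True)], []) \<in> pres_rel m R"
    using pres_rel_cancel_pair assms(2) by simp
  ultimately show ?thesis by (auto simp: inv_letter_def intro: pres_rel.trans)
qed

lemma pres_rel_trivial_or_generator:
  assumes gen: "\<And>i. i < m \<Longrightarrow> ([(i, True)], [(0, True)]) \<in> pres_rel m R"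
    and sq: "([(0, True)], [(0, False)]) \<in> pres_rel m R"
    and w: "set w \<subseteq> letters m"
  shows "(w, []) \<in> pres_rel m R \<or> (w, [(0, True)]) \<in> pres_rel m R"
  using w
proof (induction w)
  case Nil then show ?case by (auto intro: pres_rel.refl)
next
  case (Cons x w)
  have ws: "set w \<subseteq> letters m" using Cons by auto
  obtain i b where xi: "x = (i, b)" "i < m" using Cons by (auto simp: letters_def)
  have a0: "(0, True) \<in> letters m" using xi by (auto simp: letters_def)
  have "([x], [(0, True)]) \<in> pres_rel m R"
  proof (cases b)
    case True then show ?thesis using gen xi by simp
  next
    case False
    have "([inv_letter (i, True)], [inv_letter (0, True)]) \<in> pres_rel m R"
      by (rule pres_rel_inv_letters[OF gen[OF xi(2)]])
    then have "([x], [(0, False)]) \<in> pres_rel m R" using False xi by (simp add: inv_letter_def)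
    then show ?thesis using sq by (blast intro: pres_rel.trans pres_rel.sym)
  qed
  then have head: "([x] @ w, [(0, True)] @ w) \<in> pres_rel m R"
    using ws by (rule pres_rel_append_right)
  from Cons.IH[OF ws] show ?case
  proof
    assume "(w, []) \<in> pres_rel m R"
    then have "([(0, True)] @ w, [(0, True)] @ []) \<in> pres_rel m R"
      using a0 by (intro pres_rel_append_left) auto
    then show ?thesis using head by (auto intro: pres_rel.trans)
  next
    assume "(w, [(0, True)]) \<in> pres_rel m R"
    then have "([(0, True)] @ w, [(0, True)] @ [(0, True)]) \<in> pres_rel m R"
      using a0 by (intro pres_rel_append_left) auto
    then show ?thesis
      using head pres_rel_square_trivial[OF sq a0] by (auto intro: pres_rel.trans)
  qed
qed

lemma pres_group_mult_classes:
  assumes "set u \<subseteq> letters m" "set v \<subseteq> letters m"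
  shows "monoid.mult (pres_group m R) (pres_rel m R `` {u}) (pres_rel m R `` {v})
       = pres_rel m R `` {u @ v}"
proof -
  let ?E = "pres_rel m R"
  define u' where "u' = (SOME u'. u' \<in> ?E `` {u})"
  define v' where "v' = (SOME v'. v' \<in> ?E `` {v})"
  have "u \<in> ?E `` {u}" "v \<in> ?E `` {v}" using assms by (auto intro: pres_rel.refl)
  then have u': "(u, u') \<in> ?E" and v': "(v, v') \<in> ?E"
    unfolding u'_def v'_def by (metis Image_singleton_iff someI)+
  have "(u @ v, u' @ v) \<in> ?E" using u' assms by (intro pres_rel_append_right) auto
  moreover have "(u' @ v, u' @ v') \<in> ?E"
    using v' pres_rel_letters[OF u'] by (intro pres_rel_append_left) auto
  ultimately have "(u' @ v', u @ v) \<in> ?E" by (blast intro: pres_rel.trans pres_rel.sym)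
  then have "?E `` {u' @ v'} = ?E `` {u @ v}" by (rule equiv_class_eq[OF equiv_pres_rel])
  then show ?thesis by (simp add: pres_group_def u'_def v'_def)
qed

lemma pres_group_trivial_or_Z2:
  assumes m: "m \<ge> 2"
    and gen: "\<And>i. i < m \<Longrightarrow> ([(i, True)], [(0, True)]) \<in> pres_rel m R"
    and sq: "([(0, True)], [(0, False)]) \<in> pres_rel m R"
  shows "pres_group m R \<cong> singleton_group (undefined::int) \<or> pres_group m R \<cong> integer_mod_group 2"
proof -
  let ?E = "pres_rel m R"
  let ?G = "pres_group m R"
  define c0 where "c0 = ?E `` {[]}"
  define c1 where "c1 = ?E `` {[(0, True)]}"
  have a0: "set [(0::nat, True)] \<subseteq> letters m" using m by (auto simp: letters_def)
  have carrier: "carrier ?G = {c0, c1}"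
  proof
    show "carrier ?G \<subseteq> {c0, c1}"
    proof
      fix X assume "X \<in> carrier ?G"
      then obtain w where w: "set w \<subseteq> letters m" "X = ?E `` {w}"
        by (auto simp: pres_group_def quotient_def)
      from pres_rel_trivial_or_generator[OF gen sq w(1)] show "X \<in> {c0, c1}"
        using w(2) equiv_class_eq[OF equiv_pres_rel] unfolding c0_def c1_def by blast
    qed
    show "{c0, c1} \<subseteq> carrier ?G"
      using a0 unfolding c0_def c1_def pres_group_def by (auto intro: quotientI)
  qed
  have mult: "monoid.mult ?G c0 c0 = c0" "monoid.mult ?G c0 c1 = c1"
    "monoid.mult ?G c1 c0 = c1" "monoid.mult ?G c1 c1 = c0"
  proof -
    show "monoid.mult ?G c0 c0 = c0" "monoid.mult ?G c0 c1 = c1" "monoid.mult ?G c1 c0 = c1"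
      unfolding c0_def c1_def using a0 pres_group_mult_classes[of "[]" m "[]" R]
        pres_group_mult_classes[of "[]" m "[(0,True)]" R]
        pres_group_mult_classes[of "[(0,True)]" m "[]" R] by auto
    have "monoid.mult ?G c1 c1 = ?E `` {[(0, True), (0, True)]}"
      unfolding c1_def using pres_group_mult_classes[of "[(0,True)]" m "[(0,True)]" R] a0 by auto
    also have "\<dots> = c0"
      unfolding c0_def using pres_rel_square_trivial[OF sq] a0
      by (intro equiv_class_eq[OF equiv_pres_rel]) auto
    finally show "monoid.mult ?G c1 c1 = c0" .
  qed
  show ?thesis
  proof (cases "c0 = c1")
    case True
    have "(\<lambda>_. undefined) \<in> iso ?G (singleton_group (undefined::int))"
      unfolding iso_def hom_def bij_betw_def using carrier True
      by (auto simp: singleton_group_def inj_on_def)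
    then show ?thesis by (auto intro: is_isoI)
  next
    case False
    define h where "h X = (if X = c0 then 0 else 1::int)" for X
    have "h \<in> iso ?G (integer_mod_group 2)"
      unfolding iso_def hom_def bij_betw_def using carrier False mult
      by (auto simp: h_def inj_on_def carrier_integer_mod_group mult_integer_mod_group image_def)
    then show ?thesis by (auto intro: is_isoI)
  qed
qed

section \<open>Moments over tuples\<close>

definition tuples :: "'a set \<Rightarrow> nat \<Rightarrow> 'a list set" where
  "tuples W k = {xs. set xs \<subseteq> W \<and> length xs = k}"

lemma tuples_0 [simp]: "tuples W 0 = {[]}"
  by (auto simp: tuples_def)

lemma finite_tuples: "finite W \<Longrightarrow> finite (tuples W k)"
  unfolding tuples_def by (rule finite_lists_length_eq)

lemma card_tuples: "finite W \<Longrightarrow> card (tuples W k) = card W ^ k"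
  unfolding tuples_def by (rule card_lists_length_eq)

lemma sum_tuples_Suc:
  assumes "finite W"
  shows "(\<Sum>A\<in>tuples W (Suc k). F A) = (\<Sum>u\<in>W. \<Sum>A\<in>tuples W k. F (u # A))"
proof -
  have eq: "tuples W (Suc k) = (\<lambda>(xs, u). u # xs) ` (tuples W k \<times> W)"
    unfolding tuples_def by (rule lists_length_Suc_eq)
  have inj: "inj_on (\<lambda>(xs, u). u # xs) (tuples W k \<times> W)" by (auto simp: inj_on_def)
  have "(\<Sum>A\<in>tuples W (Suc k). F A) = (\<Sum>(A, u)\<in>tuples W k \<times> W. F (u # A))"
    unfolding eq by (subst sum.reindex[OF inj]) (simp add: case_prod_unfold)
  also have "\<dots> = (\<Sum>u\<in>W. \<Sum>A\<in>tuples W k. F (u # A))"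
    by (simp add: sum.cartesian_product[symmetric] sum.swap[of _ W])
  finally show ?thesis .
qed

lemma sum_tuples_sum_list:
  assumes "finite W"
  shows "real (card W) * (\<Sum>A\<in>tuples W k. \<Sum>u\<leftarrow>A. g u)
       = real k * real (card W) ^ k * (\<Sum>w\<in>W. g w :: real)"
proof (induction k)
  case 0 then show ?case by simp
next
  case (Suc k)
  have "(\<Sum>A\<in>tuples W (Suc k). \<Sum>u\<leftarrow>A. g u)
      = (\<Sum>u\<in>W. \<Sum>A\<in>tuples W k. g u + (\<Sum>v\<leftarrow>A. g v))"
    unfolding sum_tuples_Suc[OF assms] by simp
  also have "\<dots> = real (card W) ^ k * (\<Sum>u\<in>W. g u)
      + real (card W) * (\<Sum>A\<in>tuples W k. \<Sum>v\<leftarrow>A. g v)"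
    by (simp add: sum.distrib card_tuples[OF assms] sum_distrib_left)
  finally show ?case using Suc by (simp add: algebra_simps)
qed

lemma sum_tuples_sum_list_square:
  assumes "finite W" and centred: "(\<Sum>w\<in>W. g w) = (0::real)"
  shows "real (card W) * (\<Sum>A\<in>tuples W k. (\<Sum>u\<leftarrow>A. g u)\<^sup>2)
       = real k * real (card W) ^ k * (\<Sum>w\<in>W. (g w)\<^sup>2)"
proof (induction k)
  case 0 then show ?case by simp
next
  case (Suc k)
  let ?S = "\<lambda>A. \<Sum>v\<leftarrow>A. g v"
  have "(\<Sum>A\<in>tuples W (Suc k). (?S A)\<^sup>2)
      = (\<Sum>u\<in>W. \<Sum>A\<in>tuples W k. (g u)\<^sup>2 + 2 * g u * ?S A + (?S A)\<^sup>2)"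
    unfolding sum_tuples_Suc[OF assms(1)] by (simp add: power2_sum algebra_simps)
  also have "\<dots> = real (card W) ^ k * (\<Sum>u\<in>W. (g u)\<^sup>2)
      + 2 * (\<Sum>u\<in>W. g u) * (\<Sum>A\<in>tuples W k. ?S A)
      + real (card W) * (\<Sum>A\<in>tuples W k. (?S A)\<^sup>2)"
    by (simp add: sum.distrib card_tuples[OF assms(1)] sum_distrib_left sum_distrib_right
        mult.assoc sum.swap[of _ W])
  finally show ?case using Suc centred by (simp add: algebra_simps)
qed

lemma card_filter_ge_mult_le_sum:
  assumes "finite S" "\<And>x. x \<in> S \<Longrightarrow> F x \<ge> (0::real)"
  shows "real (card {x\<in>S. F x \<ge> t}) * t \<le> (\<Sum>x\<in>S. F x)"
proof -
  have "real (card {x\<in>S. F x \<ge> t}) * t = (\<Sum>x\<in>{x\<in>S. F x \<ge> t}. t)" by simp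
  also have "\<dots> \<le> (\<Sum>x\<in>{x\<in>S. F x \<ge> t}. F x)" by (intro sum_mono) auto
  also have "\<dots> \<le> (\<Sum>x\<in>S. F x)" using assms by (intro sum_mono2) auto
  finally show ?thesis .
qed

lemma card_tuples_sum_list_small_le:
  fixes g :: "'a \<Rightarrow> real"
  assumes W: "finite W" "W \<noteq> {}" and a: "a > 0"
    and \<mu>: "\<mu> = (\<Sum>w\<in>W. g w) / real (card W)" "\<mu> > 0"
  shows "real (card {A \<in> tuples W a. (\<Sum>u\<leftarrow>A. g u) < real a * \<mu> / 2})
       \<le> 4 * real (card W) ^ a * (\<Sum>w\<in>W. (g w - \<mu>)\<^sup>2) / (real a * \<mu>\<^sup>2 * real (card W))"
proof -
  let ?n = "real (card W)"
  let ?F = "\<lambda>A. (\<Sum>u\<leftarrow>A. g u - \<mu>)\<^sup>2"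
  have n: "?n > 0" using W by (simp add: card_gt_0_iff)
  have "{A \<in> tuples W a. (\<Sum>u\<leftarrow>A. g u) < real a * \<mu> / 2}
      \<subseteq> {A \<in> tuples W a. ?F A \<ge> (real a * \<mu> / 2)\<^sup>2}"
  proof safe
    fix A assume A: "A \<in> tuples W a" "(\<Sum>u\<leftarrow>A. g u) < real a * \<mu> / 2"
    have "(\<Sum>u\<leftarrow>A. g u - \<mu>) = (\<Sum>u\<leftarrow>A. g u) - real a * \<mu>"
      using A(1) by (simp add: tuples_def sum_list_subtractf sum_list_triv)
    then have "real a * \<mu> / 2 \<le> \<bar>\<Sum>u\<leftarrow>A. g u - \<mu>\<bar>" using A(2) by linarith
    then show "(real a * \<mu> / 2)\<^sup>2 \<le> ?F A"
      using \<mu>(2) by (metis abs_le_square_iff abs_of_nonneg divide_nonneg_pos mult_nonneg_nonneg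
          of_nat_0_le_iff order_less_imp_le zero_less_numeral)
  qed
  then have "real (card {A \<in> tuples W a. (\<Sum>u\<leftarrow>A. g u) < real a * \<mu> / 2}) * (real a * \<mu> / 2)\<^sup>2
      \<le> real (card {A \<in> tuples W a. ?F A \<ge> (real a * \<mu> / 2)\<^sup>2}) * (real a * \<mu> / 2)\<^sup>2"
    using finite_tuples[OF W(1)] by (intro mult_right_mono) (auto intro: card_mono)
  also have "\<dots> \<le> (\<Sum>A\<in>tuples W a. ?F A)"
    using finite_tuples[OF W(1)] by (intro card_filter_ge_mult_le_sum) auto
  also have "\<dots> = real a * ?n ^ a * (\<Sum>w\<in>W. (g w - \<mu>)\<^sup>2) / ?n"
  proof -
    have "(\<Sum>w\<in>W. g w - \<mu>) = 0" using \<mu>(1) n by (simp add: sum_subtractf)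
    from sum_tuples_sum_list_square[OF W(1) this, of a] show ?thesis
      using n by (simp add: field_simps)
  qed
  finally show ?thesis
    using a \<mu>(2) n by (simp add: field_simps power2_eq_square)
qed

fun pair_sum :: "('a \<Rightarrow> 'a \<Rightarrow> real) \<Rightarrow> 'a list \<Rightarrow> real" where
  "pair_sum d [] = 0"
| "pair_sum d (u # A) = pair_sum d A + (\<Sum>v\<leftarrow>A. d u v)"

lemma pair_sum_nonneg: "(\<And>u v. d u v \<ge> 0) \<Longrightarrow> pair_sum d A \<ge> 0"
  by (induction A) (auto intro!: add_nonneg_nonneg sum_list_nonneg)

lemma sum_tuples_pair_sum_le:
  assumes "finite W" and rows: "\<And>u. u \<in> W \<Longrightarrow> (\<Sum>w\<in>W. d u w) \<le> D" and "D \<ge> 0"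
  shows "real (card W) * (\<Sum>A\<in>tuples W k. pair_sum d A) \<le> real k ^ 2 * real (card W) ^ k * D"
proof (induction k)
  case 0 then show ?case by simp
next
  case (Suc k)
  let ?n = "real (card W)"
  have "(\<Sum>u\<in>W. ?n * (\<Sum>A\<in>tuples W k. \<Sum>v\<leftarrow>A. d u v))
      = (\<Sum>u\<in>W. real k * ?n ^ k * (\<Sum>w\<in>W. d u w))"
    using sum_tuples_sum_list[OF assms(1)] by simp
  also have "\<dots> \<le> (\<Sum>u\<in>W. real k * ?n ^ k * D)"
    by (intro sum_mono mult_left_mono rows) auto
  finally have cross: "(\<Sum>u\<in>W. ?n * (\<Sum>A\<in>tuples W k. \<Sum>v\<leftarrow>A. d u v)) \<le> ?n * (real k * ?n ^ k * D)"
    by simp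
  have "?n * (\<Sum>A\<in>tuples W (Suc k). pair_sum d A)
      = ?n * (?n * (\<Sum>A\<in>tuples W k. pair_sum d A))
        + (\<Sum>u\<in>W. ?n * (\<Sum>A\<in>tuples W k. \<Sum>v\<leftarrow>A. d u v))"
    unfolding sum_tuples_Suc[OF assms(1)] by (simp add: sum.distrib algebra_simps sum_distrib_left)
  also have "\<dots> \<le> ?n * (real k ^ 2 * ?n ^ k * D) + ?n * (real k * ?n ^ k * D)"
    using Suc cross by (intro add_mono mult_left_mono) auto
  also have "\<dots> \<le> real (Suc k) ^ 2 * ?n ^ Suc k * D"
    using assms(3) by (simp add: power2_eq_square algebra_simps)
  finally show ?case .
qed

lemma card_tuples_pair_sum_large_le:
  assumes "finite W" and rows: "\<And>u. u \<in> W \<Longrightarrow> (\<Sum>w\<in>W. d u w) \<le> D" and "D \<ge> 0"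
    and d: "\<And>u v. d u v \<ge> 0" and t: "t > 0" and n: "card W > 0"
  shows "real (card {A \<in> tuples W k. pair_sum d A \<ge> t})
       \<le> real k ^ 2 * real (card W) ^ k * D / (t * real (card W))"
proof -
  have "real (card {A \<in> tuples W k. pair_sum d A \<ge> t}) * t * real (card W)
      \<le> (\<Sum>A\<in>tuples W k. pair_sum d A) * real (card W)"
    using finite_tuples[OF assms(1)] pair_sum_nonneg[OF d]
    by (intro mult_right_mono card_filter_ge_mult_le_sum) auto
  also have "\<dots> \<le> real k ^ 2 * real (card W) ^ k * D"
    using sum_tuples_pair_sum_le[OF assms(1-3)] by (simp add: mult.commute)
  finally show ?thesis using t n by (simp add: field_simps)
qed

lemma sum_card_filter_swap:
  assumes "finite A" "finite B"
  shows "(\<Sum>a\<in>A. card {b\<in>B. P a b}) = (\<Sum>b\<in>B. card {a\<in>A. P a b})"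
proof -
  have "(\<Sum>a\<in>A. card {b\<in>B. P a b}) = (\<Sum>a\<in>A. \<Sum>b\<in>B. if P a b then 1 else 0)"
    using assms by (simp add: sum.inter_filter[symmetric])
  also have "\<dots> = (\<Sum>b\<in>B. \<Sum>a\<in>A. if P a b then 1 else 0)" by (rule sum.swap)
  also have "\<dots> = (\<Sum>b\<in>B. card {a\<in>A. P a b})"
    using assms by (simp add: sum.inter_filter[symmetric])
  finally show ?thesis .
qed

section \<open>Random tuples hitting a sparse family of neighbourhoods\<close>

definition hits :: "('a \<Rightarrow> 'a set) \<Rightarrow> nat \<Rightarrow> 'a list \<Rightarrow> bool" where
  "hits X a rs \<longleftrightarrow> (\<exists>u\<in>set (take a rs). \<exists>v\<in>set (drop a rs). v \<in> X u)"

locale sparse_neighbourhoods =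
  fixes W :: "'a set" and X :: "'a \<Rightarrow> 'a set" and K :: real
  assumes finite_W: "finite W" and W_nonempty: "W \<noteq> {}"
    and X_subset: "\<And>w. w \<in> W \<Longrightarrow> X w \<subseteq> W"
    and card_X_le: "\<And>w. w \<in> W \<Longrightarrow> real (card (X w)) \<le> K"
    and card_preimage_le: "\<And>v. v \<in> W \<Longrightarrow> real (card {w\<in>W. v \<in> X w}) \<le> K"
begin

definition size_sum :: real where
  "size_sum = (\<Sum>w\<in>W. real (card (X w)))"

definition covered :: "'a list \<Rightarrow> 'a set" where
  "covered A = \<Union> (X ` set A)"

definition overlap :: "'a \<Rightarrow> 'a \<Rightarrow> real" where
  "overlap u v = real (card (X u \<inter> X v))"

lemma K_nonneg: "K \<ge> 0"
  using W_nonempty card_X_le by (meson all_not_in_conv of_nat_0_le_iff order_trans)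

lemma card_W_pos: "card W > 0"
  using finite_W W_nonempty by (simp add: card_gt_0_iff)

lemma finite_X: "w \<in> W \<Longrightarrow> finite (X w)"
  using X_subset finite_W finite_subset by blast

lemma covered_subset: "set A \<subseteq> W \<Longrightarrow> covered A \<subseteq> W"
  using X_subset by (auto simp: covered_def)

lemma card_inter_covered_le:
  "set A \<subseteq> W \<Longrightarrow> u \<in> W \<Longrightarrow> real (card (X u \<inter> covered A)) \<le> (\<Sum>v\<leftarrow>A. overlap u v)"
proof (induction A)
  case Nil then show ?case by (simp add: covered_def)
next
  case (Cons v A)
  have "X u \<inter> covered (v # A) = (X u \<inter> X v) \<union> (X u \<inter> covered A)" by (auto simp: covered_def)
  then have "card (X u \<inter> covered (v # A)) \<le> card (X u \<inter> X v) + card (X u \<inter> covered A)"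
    by (simp add: card_Un_le)
  then show ?case using Cons by (simp add: overlap_def)
qed

text \<open>Inclusion--exclusion truncated after the pair terms.\<close>

lemma sum_card_X_le_card_covered:
  "set A \<subseteq> W \<Longrightarrow> (\<Sum>u\<leftarrow>A. real (card (X u))) \<le> real (card (covered A)) + pair_sum overlap A"
proof (induction A)
  case Nil then show ?case by (simp add: covered_def)
next
  case (Cons u A)
  have u: "u \<in> W" and A: "set A \<subseteq> W" using Cons by auto
  have fin: "finite (X u)" "finite (covered A)"
    using finite_X[OF u] covered_subset[OF A] finite_W finite_subset by auto
  have "covered (u # A) = X u \<union> covered A" by (simp add: covered_def)
  then have "real (card (X u)) + real (card (covered A))
      = real (card (covered (u # A))) + real (card (X u \<inter> covered A))"
    using card_Un_Int[OF fin] by (metis of_nat_add)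
  then show ?case using Cons A card_inter_covered_le[OF A u] by simp
qed

lemma sum_overlap_le: "u \<in> W \<Longrightarrow> (\<Sum>w\<in>W. overlap u w) \<le> K\<^sup>2"
proof -
  assume u: "u \<in> W"
  have "(\<Sum>w\<in>W. card (X u \<inter> X w)) = (\<Sum>w\<in>W. card {v\<in>X u. v \<in> X w})"
    by (intro sum.cong) (auto intro!: arg_cong[where f=card])
  also have "\<dots> = (\<Sum>v\<in>X u. card {w\<in>W. v \<in> X w})"
    by (rule sum_card_filter_swap[OF finite_W finite_X[OF u]])
  finally have "(\<Sum>w\<in>W. overlap u w) = (\<Sum>v\<in>X u. real (card {w\<in>W. v \<in> X w}))"
    unfolding overlap_def by (metis (no_types, lifting) of_nat_sum sum.cong)
  also have "\<dots> \<le> (\<Sum>v\<in>X u. K)" using card_preimage_le X_subset[OF u] by (intro sum_mono) auto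
  also have "\<dots> \<le> K * K" using card_X_le[OF u] K_nonneg by (simp add: mult_right_mono)
  finally show ?thesis by (simp add: power2_eq_square)
qed

lemma variance_card_X_le:
  "(\<Sum>w\<in>W. (real (card (X w)) - size_sum / real (card W))\<^sup>2) \<le> K * size_sum"
proof -
  let ?n = "real (card W)"
  have n: "?n > 0" using card_W_pos by simp
  have "(\<Sum>w\<in>W. (real (card (X w)) - size_sum / ?n)\<^sup>2)
      = (\<Sum>w\<in>W. (real (card (X w)))\<^sup>2) - size_sum\<^sup>2 / ?n"
    using n by (simp add: power2_diff sum.distrib sum_subtractf sum_distrib_left
        sum_divide_distrib[symmetric] size_sum_def power2_eq_square field_simps)
  also have "\<dots> \<le> (\<Sum>w\<in>W. (real (card (X w)))\<^sup>2)" using n by simp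
  also have "\<dots> \<le> (\<Sum>w\<in>W. K * real (card (X w)))"
    using card_X_le by (intro sum_mono) (auto simp: power2_eq_square intro: mult_right_mono)
  also have "\<dots> = K * size_sum" by (simp add: size_sum_def sum_distrib_left)
  finally show ?thesis .
qed

lemma card_not_hits_eq:
  "real (card {rs \<in> tuples W (a + b). \<not> hits X a rs})
     = (\<Sum>A\<in>tuples W a. real (card (W - covered A)) ^ b)"
proof -
  let ?B = "\<lambda>A. tuples (W - covered A) b"
  have split: "{rs \<in> tuples W (a + b). \<not> hits X a rs} = (\<lambda>(A, B). A @ B) ` (SIGMA A:tuples W a. ?B A)"
  proof (intro equalityI subsetI)
    fix rs assume "rs \<in> {rs \<in> tuples W (a + b). \<not> hits X a rs}"
    then have "take a rs \<in> tuples W a" "drop a rs \<in> ?B (take a rs)"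
      using set_take_subset[of a rs] set_drop_subset[of a rs]
      by (auto simp: tuples_def hits_def covered_def)
    then show "rs \<in> (\<lambda>(A, B). A @ B) ` (SIGMA A:tuples W a. ?B A)"
      by (intro image_eqI[of _ _ "(take a rs, drop a rs)"]) auto
  qed (auto simp: tuples_def hits_def covered_def)
  have inj: "inj_on (\<lambda>(A, B). A @ B) (SIGMA A:tuples W a. ?B A)"
    by (auto simp: inj_on_def tuples_def)
  have "card {rs \<in> tuples W (a + b). \<not> hits X a rs} = card (SIGMA A:tuples W a. ?B A)"
    unfolding split by (rule card_image[OF inj])
  also have "\<dots> = (\<Sum>A\<in>tuples W a. card (W - covered A) ^ b)"
    using finite_tuples finite_W by (subst card_SigmaI) (auto intro!: sum.cong card_tuples)
  finally show ?thesis by simp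
qed

lemma card_uncovered_power_le:
  assumes A: "set A \<subseteq> W"
    and large: "real a * (size_sum / real (card W)) / 4 \<le> real (card (covered A))"
  shows "real (card (W - covered A)) ^ b
       \<le> real (card W) ^ b * exp (- (real a * real b * size_sum / (4 * (real (card W))\<^sup>2)))"
proof -
  let ?n = "real (card W)"
  have n: "?n > 0" using card_W_pos by simp
  have "real (card (W - covered A)) = ?n - real (card (covered A))"
    using covered_subset[OF A] finite_W by (simp add: card_Diff_subset finite_subset of_nat_diff card_mono)
  also have "\<dots> \<le> ?n * (1 - real a * size_sum / (4 * ?n\<^sup>2))"
    using large n by (simp add: field_simps power2_eq_square)
  also have "\<dots> \<le> ?n * exp (- (real a * size_sum / (4 * ?n\<^sup>2)))"
    using n by (intro mult_left_mono exp_minus_ge) auto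
  finally have "real (card (W - covered A)) ^ b \<le> (?n * exp (- (real a * size_sum / (4 * ?n\<^sup>2)))) ^ b"
    by (intro power_mono) auto
  also have "\<dots> = ?n ^ b * exp (- (real a * real b * size_sum / (4 * ?n\<^sup>2)))"
    by (simp add: power_mult_distrib exp_of_nat_mult[symmetric])
  finally show ?thesis .
qed

text \<open>
  Outside an exceptional set of first halves \<open>A\<close>, counted by Chebyshev's and Markov's
  inequalities, the neighbourhoods of \<open>A\<close> cover at least a quarter of their expected size.
\<close>

lemma card_not_hits_le:
  assumes a: "a \<ge> 1" and pos: "size_sum > 0"
  shows "real (card {rs \<in> tuples W (a + b). \<not> hits X a rs})
     \<le> real (card W) ^ (a + b) * (exp (- (real a * real b * size_sum / (4 * (real (card W))\<^sup>2)))
          + 4 * K * real (card W) / (real a * size_sum) + 4 * real a * K\<^sup>2 / size_sum)"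
proof -
  let ?n = "real (card W)"
  let ?\<mu> = "size_sum / ?n"
  let ?ex = "exp (- (real a * real b * size_sum / (4 * ?n\<^sup>2)))"
  define Small where "Small = {A \<in> tuples W a. (\<Sum>u\<leftarrow>A. real (card (X u))) < real a * ?\<mu> / 2}"
  define Crowded where "Crowded = {A \<in> tuples W a. pair_sum overlap A \<ge> real a * ?\<mu> / 4}"
  have n: "?n > 0" using card_W_pos by simp
  have \<mu>: "?\<mu> > 0" using pos n by simp
  have card_Small: "real (card Small) \<le> 4 * K * ?n ^ (a + 1) / (real a * size_sum)"
  proof -
    have "real (card Small)
        \<le> 4 * ?n ^ a * (\<Sum>w\<in>W. (real (card (X w)) - ?\<mu>)\<^sup>2) / (real a * ?\<mu>\<^sup>2 * ?n)"
      unfolding Small_def using a \<mu>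
      by (intro card_tuples_sum_list_small_le finite_W W_nonempty) (auto simp: size_sum_def)
    also have "\<dots> \<le> 4 * ?n ^ a * (K * size_sum) / (real a * ?\<mu>\<^sup>2 * ?n)"
      using variance_card_X_le a \<mu> n by (intro divide_right_mono mult_left_mono) auto
    also have "\<dots> = 4 * K * ?n ^ (a + 1) / (real a * size_sum)"
      using n pos by (simp add: field_simps power2_eq_square)
    finally show ?thesis .
  qed
  have card_Crowded: "real (card Crowded) \<le> 4 * real a * K\<^sup>2 * ?n ^ a / size_sum"
  proof -
    have "real (card Crowded) \<le> real a ^ 2 * ?n ^ a * K\<^sup>2 / (real a * ?\<mu> / 4 * ?n)"
      unfolding Crowded_def using a pos n card_W_pos
      by (intro card_tuples_pair_sum_large_le finite_W sum_overlap_le) (auto simp: overlap_def)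
    also have "\<dots> = 4 * real a * K\<^sup>2 * ?n ^ a / size_sum"
      using n pos a by (simp add: field_simps power2_eq_square)
    finally show ?thesis .
  qed
  have each: "real (card (W - covered A)) ^ b \<le> ?n ^ b * ?ex + (if A \<in> Small \<union> Crowded then ?n ^ b else 0)"
    if A: "A \<in> tuples W a" for A
  proof (cases "A \<in> Small \<union> Crowded")
    case True
    have "real (card (W - covered A)) ^ b \<le> ?n ^ b"
      using finite_W by (intro power_mono) (auto intro: card_mono)
    moreover have "?n ^ b * ?ex \<ge> 0" by simp
    moreover have "(if A \<in> Small \<union> Crowded then ?n ^ b else 0) = ?n ^ b" using True by simp
    ultimately show ?thesis by linarith
  next
    case False
    have As: "set A \<subseteq> W" using A by (simp add: tuples_def)
    have "real a * ?\<mu> / 4 \<le> real (card (covered A))"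
      using False A sum_card_X_le_card_covered[OF As] by (auto simp: Small_def Crowded_def)
    then show ?thesis using False card_uncovered_power_le[OF As] by simp
  qed
  have "real (card {rs \<in> tuples W (a + b). \<not> hits X a rs})
      \<le> (\<Sum>A\<in>tuples W a. ?n ^ b * ?ex + (if A \<in> Small \<union> Crowded then ?n ^ b else 0))"
    unfolding card_not_hits_eq by (intro sum_mono each)
  also have "\<dots> = ?n ^ (a + b) * ?ex + ?n ^ b * real (card (Small \<union> Crowded))"
  proof -
    have "tuples W a \<inter> {A. A \<in> Small \<union> Crowded} = Small \<union> Crowded"
      by (auto simp: Small_def Crowded_def)
    then show ?thesis
      using finite_tuples[OF finite_W] card_tuples[OF finite_W]
      by (simp add: sum.distrib sum.If_cases power_add)
  qed
  also have "\<dots> \<le> ?n ^ (a + b) * ?ex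
      + ?n ^ b * (4 * K * ?n ^ (a + 1) / (real a * size_sum) + 4 * real a * K\<^sup>2 * ?n ^ a / size_sum)"
    using card_Small card_Crowded card_Un_le[of Small Crowded]
    by (intro add_left_mono mult_left_mono) auto
  also have "\<dots> = ?n ^ (a + b) * (?ex + 4 * K * ?n / (real a * size_sum) + 4 * real a * K\<^sup>2 / size_sum)"
    by (simp add: power_add algebra_simps)
  finally show ?thesis .
qed

end

section \<open>Reduced words and middle-letter swaps\<close>

lemma neq_inv_letter_commute: "a \<noteq> inv_letter b \<longleftrightarrow> b \<noteq> inv_letter a"
  by (metis inv_letter_inv)

lemma freely_reduced_Nil [simp]: "freely_reduced []"
  and freely_reduced_singleton [simp]: "freely_reduced [a]"
  by (auto simp: freely_reduced_def)

lemma freely_reduced_Cons_Cons: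
  "freely_reduced (a # b # w) \<longleftrightarrow> b \<noteq> inv_letter a \<and> freely_reduced (b # w)"
  unfolding freely_reduced_def
proof safe
  fix i assume "\<forall>i. Suc i < length (a # b # w) \<longrightarrow>
      (a # b # w) ! Suc i \<noteq> inv_letter ((a # b # w) ! i)" "Suc i < length (b # w)"
    "(b # w) ! Suc i = inv_letter ((b # w) ! i)"
  then show False by (metis Suc_less_eq length_Cons nth_Cons_Suc)
next
  fix i assume h: "\<forall>i. Suc i < length (b # w) \<longrightarrow> (b # w) ! Suc i \<noteq> inv_letter ((b # w) ! i)"
    "b \<noteq> inv_letter a" "Suc i < length (a # b # w)"
    "(a # b # w) ! Suc i = inv_letter ((a # b # w) ! i)"
  then show False by (cases i) auto
qed auto

lemma freely_reduced_Cons: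
  "freely_reduced (a # w) \<longleftrightarrow> (w \<noteq> [] \<longrightarrow> hd w \<noteq> inv_letter a) \<and> freely_reduced w"
  by (cases w) (auto simp: freely_reduced_Cons_Cons)

lemma freely_reduced_append_Cons:
  "freely_reduced (xs @ c # ys) \<longleftrightarrow> freely_reduced (xs @ [c]) \<and> freely_reduced (c # ys)"
proof (induction xs)
  case Nil then show ?case by simp
next
  case (Cons a xs)
  have "hd (xs @ c # ys) = hd (xs @ [c])" by (cases xs) auto
  then show ?case using Cons by (auto simp: freely_reduced_Cons[of a])
qed

lemma freely_reduced_snoc:
  "freely_reduced (w @ [a]) \<longleftrightarrow> freely_reduced w \<and> (w \<noteq> [] \<longrightarrow> a \<noteq> inv_letter (last w))"
proof (induction w)
  case Nil then show ?case by simp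
next
  case (Cons b w)
  then show ?case by (cases w) (simp_all add: freely_reduced_Cons[of b])
qed

lemma freely_reduced_rev: "freely_reduced (rev w) \<longleftrightarrow> freely_reduced w"
proof (induction w)
  case Nil then show ?case by simp
next
  case (Cons a w)
  then show ?case
    using neq_inv_letter_commute by (auto simp: freely_reduced_snoc last_rev freely_reduced_Cons)
qed

lemma finite_letters: "finite (letters m)"
  by (simp add: letters_def)

lemma card_letters: "card (letters m) = 2 * m"
  by (simp add: letters_def card_cartesian_product)

definition reduced_extensions :: "nat \<Rightarrow> letter \<Rightarrow> nat \<Rightarrow> letter list set" where
  "reduced_extensions m a n = {v. set v \<subseteq> letters m \<and> length v = n \<and> freely_reduced (a # v)}"

lemma finite_reduced_extensions: "finite (reduced_extensions m a n)"
  unfolding reduced_extensions_def using finite_lists_length_eq[OF finite_letters, of m n]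
  by (rule finite_subset[rotated]) auto

lemma reduced_extensions_Suc:
  "reduced_extensions m a (Suc n)
     = (\<lambda>(c, v). c # v) ` (SIGMA c:letters m - {inv_letter a}. reduced_extensions m c n)"
proof (intro equalityI subsetI)
  fix w assume "w \<in> reduced_extensions m a (Suc n)"
  then obtain c v where "w = c # v" "c \<in> letters m" "set v \<subseteq> letters m" "length v = n"
    "c \<noteq> inv_letter a" "freely_reduced (c # v)"
    by (auto simp: reduced_extensions_def length_Suc_conv freely_reduced_Cons_Cons)
  then show "w \<in> (\<lambda>(c, v). c # v) ` (SIGMA c:letters m - {inv_letter a}. reduced_extensions m c n)"
    by (auto simp: reduced_extensions_def)
qed (auto simp: reduced_extensions_def freely_reduced_Cons_Cons)

lemma card_reduced_extensions:
  "a \<in> letters m \<Longrightarrow> card (reduced_extensions m a n) = (2 * m - 1) ^ n"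
proof (induction n arbitrary: a)
  case 0
  have "reduced_extensions m a 0 = {[]}" by (auto simp: reduced_extensions_def)
  then show ?case by simp
next
  case (Suc n)
  have inj: "inj_on (\<lambda>(c, v). c # v) (SIGMA c:letters m - {inv_letter a}. reduced_extensions m c n)"
    by (auto simp: inj_on_def)
  have "card (reduced_extensions m a (Suc n))
      = (\<Sum>c\<in>letters m - {inv_letter a}. card (reduced_extensions m c n))"
    unfolding reduced_extensions_Suc card_image[OF inj]
    using finite_letters finite_reduced_extensions by (intro card_SigmaI) auto
  also have "\<dots> = (\<Sum>c\<in>letters m - {inv_letter a}. (2 * m - 1) ^ n)"
    using Suc.IH by (intro sum.cong) auto
  also have "\<dots> = (2 * m - 1) * (2 * m - 1) ^ n"
    using inv_letter_in_letters[OF Suc.prems] finite_letters by (simp add: card_letters)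
  finally show ?case by simp
qed

lemma finite_reduced_words: "finite (reduced_words m l)"
  unfolding reduced_words_def using finite_lists_length_eq[OF finite_letters, of m l]
  by (rule finite_subset[rotated]) auto

lemma card_reduced_words_Suc: "card (reduced_words m (Suc n)) = 2 * m * (2 * m - 1) ^ n"
proof -
  have eq: "reduced_words m (Suc n) = (\<lambda>(a, v). a # v) ` (SIGMA a:letters m. reduced_extensions m a n)"
    by (auto simp: reduced_words_def reduced_extensions_def length_Suc_conv image_iff)
  have inj: "inj_on (\<lambda>(a, v). a # v) (SIGMA a:letters m. reduced_extensions m a n)"
    by (auto simp: inj_on_def)
  have "card (reduced_words m (Suc n)) = (\<Sum>a\<in>letters m. card (reduced_extensions m a n))"
    unfolding eq card_image[OF inj]
    using finite_letters finite_reduced_extensions by (intro card_SigmaI) auto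
  also have "\<dots> = (\<Sum>a\<in>letters m. (2 * m - 1) ^ n)"
    using card_reduced_extensions by (intro sum.cong) auto
  finally show ?thesis by (simp add: card_letters)
qed

definition zxz_at :: "letter \<Rightarrow> letter \<Rightarrow> letter list \<Rightarrow> nat \<Rightarrow> bool" where
  "zxz_at z x w q \<longleftrightarrow> Suc (Suc q) < length w \<and> w ! q = z \<and> w ! Suc q = x \<and> w ! Suc (Suc q) = z"

definition middle_swaps :: "letter \<Rightarrow> letter \<Rightarrow> letter \<Rightarrow> letter list \<Rightarrow> letter list set" where
  "middle_swaps x y z w = (\<lambda>q. w[Suc q := y]) ` {q. zxz_at z x w q}"

lemma zxz_at_decomp:
  assumes "zxz_at z x w q"
  shows "w = take q w @ z # x # z # drop (Suc (Suc (Suc q))) w"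
proof -
  have "Suc (Suc q) < length w" using assms by (simp add: zxz_at_def)
  then have "drop q w = w ! q # w ! Suc q # w ! Suc (Suc q) # drop (Suc (Suc (Suc q))) w"
    by (simp add: Cons_nth_drop_Suc)
  then show ?thesis using assms append_take_drop_id[of q w] by (simp add: zxz_at_def)
qed

lemma card_zxz_at_ge:
  assumes xz: "x \<in> letters m" "z \<in> letters m" "x \<noteq> inv_letter z" and q: "q + 3 \<le> l"
  shows "(2 * m - 1) ^ (l - 3) \<le> card {w \<in> reduced_words m l. zxz_at z x w q}"
proof -
  define r where "r = l - q - 3"
  define glue where "glue = (\<lambda>(u, v). rev u @ z # x # z # v)"
  have inj: "inj_on glue (reduced_extensions m z q \<times> reduced_extensions m z r)"
  proof (rule inj_onI, clarsimp simp: glue_def)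
    fix u v u' v' assume "u \<in> reduced_extensions m z q" "u' \<in> reduced_extensions m z q"
      "rev u @ z # x # z # v = rev u' @ z # x # z # v'"
    moreover have "length (rev u) = length (rev u')"
      using calculation by (simp add: reduced_extensions_def)
    ultimately show "u = u' \<and> v = v'" by auto
  qed
  have "glue ` (reduced_extensions m z q \<times> reduced_extensions m z r)
      \<subseteq> {w \<in> reduced_words m l. zxz_at z x w q}"
  proof clarsimp
    fix u v assume h: "u \<in> reduced_extensions m z q" "v \<in> reduced_extensions m z r"
    have "freely_reduced (rev u @ [z])"
      using h(1) freely_reduced_rev[of "z # u"] by (simp add: reduced_extensions_def)
    moreover have "freely_reduced (z # x # z # v)"
      using h(2) xz by (simp add: reduced_extensions_def freely_reduced_Cons_Cons neq_inv_letter_commute)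
    then have "freely_reduced (rev u @ z # x # z # v)"
      using \<open>freely_reduced (rev u @ [z])\<close> freely_reduced_append_Cons by blast
    moreover have "length u = q" "length v = r" using h by (auto simp: reduced_extensions_def)
    moreover have "set (rev u @ z # x # z # v) \<subseteq> letters m"
      using h xz by (auto simp: reduced_extensions_def)
    ultimately show "glue (u, v) \<in> reduced_words m l \<and> zxz_at z x (glue (u, v)) q"
      using q by (simp add: glue_def reduced_words_def r_def zxz_at_def nth_append, linarith)
  qed
  then have "card (reduced_extensions m z q \<times> reduced_extensions m z r)
      \<le> card {w \<in> reduced_words m l. zxz_at z x w q}"
    using card_inj_on_le[OF inj] finite_reduced_words by simp
  moreover have "card (reduced_extensions m z q \<times> reduced_extensions m z r) = (2 * m - 1) ^ (l - 3)"
    using xz q by (simp add: card_cartesian_product card_reduced_extensions r_def power_add[symmetric])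
  ultimately show ?thesis by simp
qed

text \<open>
  The conditions \<open>x \<noteq> z\<^sup>-\<^sup>1\<close> and \<open>y \<noteq> z\<^sup>-\<^sup>1\<close> make the swap \<open>z x z \<mapsto> z y z\<close>
  preserve reducedness; \<open>x \<noteq> y\<close> makes distinct positions give distinct swaps.
\<close>

locale swap_triple =
  fixes m :: nat and x y z :: letter
  assumes m: "m \<ge> 1" and x: "x \<in> letters m" and y: "y \<in> letters m" and z: "z \<in> letters m"
    and x_neq_y: "x \<noteq> y" and x_neq_inv_z: "x \<noteq> inv_letter z" and y_neq_inv_z: "y \<noteq> inv_letter z"
begin

lemma middle_swaps_subset_reduced_words:
  assumes "w \<in> reduced_words m l"
  shows "middle_swaps x y z w \<subseteq> reduced_words m l"
proof
  fix v assume "v \<in> middle_swaps x y z w"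
  then obtain q where q: "zxz_at z x w q" "v = w[Suc q := y]" by (auto simp: middle_swaps_def)
  define u where "u = take q w"
  define s where "s = drop (Suc (Suc (Suc q))) w"
  have w: "w = u @ z # x # z # s" using zxz_at_decomp[OF q(1)] by (simp add: u_def s_def)
  have "length u = q" using q(1) by (simp add: u_def zxz_at_def)
  then have v: "v = u @ z # y # z # s" using q(2) by (subst (asm) w) (simp add: list_update_append)
  have "freely_reduced (u @ z # x # z # s)" using assms w by (simp add: reduced_words_def)
  then have prefix: "freely_reduced (u @ [z])" and suffix: "freely_reduced (z # s)"
    using freely_reduced_append_Cons[of u z "x # z # s"] by (auto simp: freely_reduced_Cons_Cons)
  have "freely_reduced (z # y # z # s)"
    using suffix y_neq_inv_z neq_inv_letter_commute[of z y] by (simp add: freely_reduced_Cons_Cons)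
  then have "freely_reduced v" using prefix v freely_reduced_append_Cons by blast
  moreover have "set v \<subseteq> insert y (set w)" using q(2) set_update_subset_insert by metis
  then have "set v \<subseteq> letters m" using assms y by (auto simp: reduced_words_def)
  moreover have "length v = l" using assms q(2) by (simp add: reduced_words_def)
  ultimately show "v \<in> reduced_words m l" by (simp add: reduced_words_def)
qed

lemma card_middle_swaps: "card (middle_swaps x y z w) = card {q. zxz_at z x w q}"
  unfolding middle_swaps_def
proof (rule card_image, rule inj_onI, rule ccontr)
  fix q q' assume "q \<in> {q. zxz_at z x w q}" "w[Suc q := y] = w[Suc q' := y]" "q \<noteq> q'"
  then have "y = x" by (metis nth_list_update_eq nth_list_update_neq old.nat.inject zxz_at_def
        mem_Collect_eq Suc_lessD)
  then show False using x_neq_y by simp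
qed

lemma card_middle_swaps_le: "card (middle_swaps x y z w) \<le> length w"
proof -
  have "{q. zxz_at z x w q} \<subseteq> {..<length w}" by (auto simp: zxz_at_def)
  then show ?thesis unfolding card_middle_swaps using card_mono[of "{..<length w}"] by fastforce
qed

lemma card_middle_swaps_preimage_le:
  "card {w \<in> reduced_words m l. v \<in> middle_swaps x y z w} \<le> l"
proof -
  have "{w \<in> reduced_words m l. v \<in> middle_swaps x y z w} \<subseteq> (\<lambda>i. v[i := x]) ` {..<l}"
  proof clarify
    fix w assume h: "w \<in> reduced_words m l" "v \<in> middle_swaps x y z w"
    then obtain q where q: "zxz_at z x w q" "v = w[Suc q := y]" by (auto simp: middle_swaps_def)
    then have "w ! Suc q = x" by (simp add: zxz_at_def)
    then have "w = v[Suc q := x]" using q(2) by (metis list_update_id list_update_overwrite)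
    moreover have "Suc q < l" using q h by (auto simp: zxz_at_def reduced_words_def)
    ultimately show "w \<in> (\<lambda>i. v[i := x]) ` {..<l}" by auto
  qed
  then have "card {w \<in> reduced_words m l. v \<in> middle_swaps x y z w} \<le> card ((\<lambda>i. v[i := x]) ` {..<l})"
    by (intro card_mono) auto
  also have "\<dots> \<le> l" using card_image_le[of "{..<l}"] by simp
  finally show ?thesis .
qed

lemma sum_card_middle_swaps_ge:
  assumes l: "l \<ge> 3"
  shows "real (l - 2) * real (2 * m - 1) ^ (l - 3)
       \<le> (\<Sum>w\<in>reduced_words m l. real (card (middle_swaps x y z w)))"
proof -
  have "(l - 2) * (2 * m - 1) ^ (l - 3) = (\<Sum>q<l-2. (2 * m - 1) ^ (l - 3))" by simp
  also have "\<dots> \<le> (\<Sum>q<l-2. card {w\<in>reduced_words m l. zxz_at z x w q})"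
    using l by (intro sum_mono card_zxz_at_ge[OF x z x_neq_inv_z]) auto
  also have "\<dots> \<le> (\<Sum>q<l. card {w\<in>reduced_words m l. zxz_at z x w q})"
    by (intro sum_mono2) auto
  also have "\<dots> = (\<Sum>w\<in>reduced_words m l. card {q\<in>{..<l}. zxz_at z x w q})"
    by (rule sum_card_filter_swap) (simp_all add: finite_reduced_words)
  also have "\<dots> = (\<Sum>w\<in>reduced_words m l. card (middle_swaps x y z w))"
    by (intro sum.cong refl)
      (auto simp: card_middle_swaps reduced_words_def zxz_at_def intro!: arg_cong[where f=card])
  finally have "real ((l - 2) * (2 * m - 1) ^ (l - 3))
      \<le> real (\<Sum>w\<in>reduced_words m l. card (middle_swaps x y z w))"
    by (simp only: of_nat_le_iff)
  then show ?thesis by simp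
qed

lemma sparse_neighbourhoods_middle_swaps:
  assumes "l \<ge> 1"
  shows "sparse_neighbourhoods (reduced_words m l) (middle_swaps x y z) (real l)"
proof
  show "finite (reduced_words m l)" by (rule finite_reduced_words)
  have "card (reduced_words m l) > 0"
    using card_reduced_words_Suc[of m "l - 1"] assms m by simp
  then show "reduced_words m l \<noteq> {}" by auto
  show "middle_swaps x y z w \<subseteq> reduced_words m l" if "w \<in> reduced_words m l" for w
    using middle_swaps_subset_reduced_words[OF that] .
  show "real (card (middle_swaps x y z w)) \<le> real l" if "w \<in> reduced_words m l" for w
    using card_middle_swaps_le[of w] that by (simp add: reduced_words_def)
  show "real (card {w \<in> reduced_words m l. v \<in> middle_swaps x y z w}) \<le> real l" for v
    using card_middle_swaps_preimage_le[of l v] by simp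
qed

lemma middle_swaps_decomp:
  assumes "v \<in> middle_swaps x y z u"
  obtains U V where "u = U @ [x] @ V" "v = U @ [y] @ V"
proof -
  obtain q where q: "zxz_at z x u q" "v = u[Suc q := y]" using assms by (auto simp: middle_swaps_def)
  then have l: "Suc q < length u" by (simp add: zxz_at_def)
  show ?thesis
    using that[of "take (Suc q) u" "drop (Suc (Suc q)) u"] id_take_nth_drop[OF l]
      upd_conv_take_nth_drop[OF l, of y] q by (simp add: zxz_at_def)
qed

end

text \<open>
  The bound of \<open>card_not_hits_le\<close> after inserting \<open>|W| = (\<beta> + 1) \<beta>\<^bsup>l-1\<^esup>\<close> and
  \<open>\<Sum>\<^sub>w |X w| \<ge> (l - 2) \<beta>\<^bsup>l-3\<^esup>\<close> for the middle swaps of reduced words of length \<open>l\<close>.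
\<close>

definition swap_miss_bound :: "real \<Rightarrow> nat \<Rightarrow> nat \<Rightarrow> nat \<Rightarrow> real" where
  "swap_miss_bound \<beta> l a b =
     exp (- (real a * real b * (real l - 2) / (4 * (\<beta> + 1)\<^sup>2 * \<beta> ^ (l + 1))))
     + 4 * real l * (\<beta> + 1) * \<beta>\<^sup>2 / (real a * (real l - 2))
     + 4 * real a * (real l)\<^sup>2 / ((real l - 2) * \<beta> ^ (l - 3))"

lemma swap_miss_bound_nonneg: "\<beta> > 0 \<Longrightarrow> l \<ge> 3 \<Longrightarrow> swap_miss_bound \<beta> l a b \<ge> 0"
  unfolding swap_miss_bound_def
  by (intro add_nonneg_nonneg) (auto intro!: divide_nonneg_nonneg mult_nonneg_nonneg)

context swap_triple
begin

lemma card_tuples_not_hits_middle_swaps_le: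
  assumes l: "l \<ge> 3" and a: "a \<ge> 1"
  shows "real (card {rs \<in> tuples (reduced_words m l) (a + b). \<not> hits (middle_swaps x y z) a rs})
     \<le> real (card (reduced_words m l)) ^ (a + b) * swap_miss_bound (real (2 * m - 1)) l a b"
proof -
  interpret H: sparse_neighbourhoods "reduced_words m l" "middle_swaps x y z" "real l"
    using sparse_neighbourhoods_middle_swaps l by simp
  define \<beta> where "\<beta> = real (2 * m - 1)"
  define n where "n = real (card (reduced_words m l))"
  define \<sigma> where "\<sigma> = (real l - 2) * \<beta> ^ (l - 3)"
  obtain k where k: "l = k + 3" using l le_iff_add by (metis add.commute)
  have \<beta>: "\<beta> \<ge> 1" using m by (simp add: \<beta>_def)
  have n_eq: "n = (\<beta> + 1) * \<beta> ^ (k + 2)"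
    using card_reduced_words_Suc[of m "k + 2"] m k
    by (simp add: n_def \<beta>_def of_nat_diff numeral_3_eq_3)
  have \<sigma>: "\<sigma> \<le> H.size_sum" "\<sigma> > 0"
    using sum_card_middle_swaps_ge[OF l] l \<beta> by (simp_all add: \<sigma>_def H.size_sum_def \<beta>_def of_nat_diff)
  have n: "n > 0" using H.card_W_pos by (simp add: n_def)
  have e: "\<beta> ^ (k + 2) = \<beta>\<^sup>2 * \<beta> ^ k" "\<beta> ^ (l + 1) = \<beta> ^ 4 * \<beta> ^ k" "l - 3 = k"
    "real l - 2 = real k + 1"
    using k by (simp_all add: power_add power2_eq_square)
  have nonzero: "\<beta> ^ k \<noteq> 0" "\<beta> \<noteq> 0" "\<beta> + 1 \<noteq> 0" "real a \<noteq> 0" using \<beta> a by simp_all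
  have "exp (- (real a * real b * H.size_sum / (4 * n\<^sup>2)))
      \<le> exp (- (real a * real b * \<sigma> / (4 * n\<^sup>2)))"
    using \<sigma> by (simp add: divide_right_mono mult_left_mono)
  also have "real a * real b * \<sigma> / (4 * n\<^sup>2)
      = real a * real b * (real l - 2) / (4 * (\<beta> + 1)\<^sup>2 * \<beta> ^ (l + 1))"
    unfolding \<sigma>_def n_eq e using nonzero by (simp add: divide_simps power2_eq_square eval_nat_numeral)
  finally have t1: "exp (- (real a * real b * H.size_sum / (4 * n\<^sup>2)))
      \<le> exp (- (real a * real b * (real l - 2) / (4 * (\<beta> + 1)\<^sup>2 * \<beta> ^ (l + 1))))" .
  have "4 * real l * n / (real a * H.size_sum) \<le> 4 * real l * n / (real a * \<sigma>)"
    using \<sigma> a n by (intro divide_left_mono mult_left_mono mult_pos_pos) auto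
  also have "\<dots> = 4 * real l * (\<beta> + 1) * \<beta>\<^sup>2 / (real a * (real l - 2))"
    unfolding \<sigma>_def n_eq e using nonzero by (simp add: divide_simps power2_eq_square)
  finally have t2: "4 * real l * n / (real a * H.size_sum)
      \<le> 4 * real l * (\<beta> + 1) * \<beta>\<^sup>2 / (real a * (real l - 2))" .
  have t3: "4 * real a * (real l)\<^sup>2 / H.size_sum \<le> 4 * real a * (real l)\<^sup>2 / ((real l - 2) * \<beta> ^ (l - 3))"
    using \<sigma> l by (simp add: \<sigma>_def divide_left_mono)
  have "real (card {rs \<in> tuples (reduced_words m l) (a + b). \<not> hits (middle_swaps x y z) a rs})
      \<le> n ^ (a + b) * (exp (- (real a * real b * H.size_sum / (4 * n\<^sup>2)))
          + 4 * real l * n / (real a * H.size_sum) + 4 * real a * (real l)\<^sup>2 / H.size_sum)"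
    using H.card_not_hits_le[OF a, of b] \<sigma> by (simp add: n_def)
  also have "\<dots> \<le> n ^ (a + b) * swap_miss_bound \<beta> l a b"
    unfolding swap_miss_bound_def using n t1 t2 t3 by (intro mult_left_mono add_mono) auto
  finally show ?thesis by (simp add: n_def \<beta>_def)
qed

end

section \<open>Asymptotics\<close>

lemma half_split_bounds:
  assumes r: "r \<ge> 4" and N: "r - 1 \<le> real N" "real N \<le> r"
  shows "r / 4 \<le> real (N div 2)" "real (N div 2) \<le> r"
    "r\<^sup>2 / 11 \<le> real (N div 2) * real (N - N div 2)"
proof -
  define a where "a = N div 2"
  have "N \<le> 2 * a + 1" "2 * a \<le> N" unfolding a_def by presburger+
  then have h: "real N \<le> 2 * real a + 1" "2 * real a \<le> real N" "real (N - a) = real N - real a"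
    by (simp_all add: of_nat_diff flip: of_nat_le_iff)
  show "r / 4 \<le> real (N div 2)" "real (N div 2) \<le> r" using h N r unfolding a_def by linarith+
  have "(r - 2) * (r - 1) \<le> (2 * real a) * (2 * (real N - real a))"
    using h N r by (intro mult_mono) auto
  moreover have "4 * (r\<^sup>2 / 11) \<le> (r - 2) * (r - 1)"
  proof -
    have "0 \<le> (r - 4) * (7 * r - 5)" using r by (intro mult_nonneg_nonneg) auto
    then show ?thesis by (simp add: power2_eq_square algebra_simps)
  qed
  moreover have "(2 * real a) * (2 * (real N - real a)) = 4 * (real a * real (N - a))"
    using h(3) by simp
  ultimately show "r\<^sup>2 / 11 \<le> real (N div 2) * real (N - N div 2)"
    unfolding a_def by linarith
qed

lemma swap_miss_bound_half_split_le:
  assumes \<beta>: "\<beta> \<ge> 1" and l: "l \<ge> 3" and r: "r \<ge> 4" and N: "r - 1 \<le> real N" "real N \<le> r"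
  shows "swap_miss_bound \<beta> l (N div 2) (N - N div 2)
     \<le> exp (- (r\<^sup>2 * (real l - 2) / (44 * (\<beta> + 1)\<^sup>2 * \<beta> * \<beta> ^ l)))
       + 16 * (\<beta> + 1) * \<beta>\<^sup>2 * real l / (r * (real l - 2))
       + 4 * \<beta> ^ 3 * r * (real l)\<^sup>2 / ((real l - 2) * \<beta> ^ l)"
proof -
  define a where "a = N div 2"
  define b where "b = N - N div 2"
  note split = half_split_bounds[OF r N, folded a_def b_def]
  have pos: "real l - 2 > 0" "\<beta> ^ l > 0" "\<beta> ^ (l - 3) > 0" "real a > 0"
    using l \<beta> split(1) r by auto
  have "r\<^sup>2 * (real l - 2) / (44 * (\<beta> + 1)\<^sup>2 * \<beta> * \<beta> ^ l)
      = r\<^sup>2 / 11 * (real l - 2) / (4 * (\<beta> + 1)\<^sup>2 * \<beta> ^ (l + 1))"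
    by (simp add: field_simps)
  also have "\<dots> \<le> real a * real b * (real l - 2) / (4 * (\<beta> + 1)\<^sup>2 * \<beta> ^ (l + 1))"
    using split(3) pos \<beta> by (intro divide_right_mono mult_right_mono) auto
  finally have t1: "exp (- (real a * real b * (real l - 2) / (4 * (\<beta> + 1)\<^sup>2 * \<beta> ^ (l + 1))))
      \<le> exp (- (r\<^sup>2 * (real l - 2) / (44 * (\<beta> + 1)\<^sup>2 * \<beta> * \<beta> ^ l)))" by simp
  have "4 * real l * (\<beta> + 1) * \<beta>\<^sup>2 / (real a * (real l - 2))
      \<le> 4 * real l * (\<beta> + 1) * \<beta>\<^sup>2 / (r / 4 * (real l - 2))"
    using split(1) pos \<beta> r by (intro divide_left_mono mult_right_mono mult_pos_pos) auto
  then have t2: "4 * real l * (\<beta> + 1) * \<beta>\<^sup>2 / (real a * (real l - 2))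
      \<le> 16 * (\<beta> + 1) * \<beta>\<^sup>2 * real l / (r * (real l - 2))"
    by (simp add: field_simps)
  have "4 * real a * (real l)\<^sup>2 / ((real l - 2) * \<beta> ^ (l - 3))
      \<le> 4 * r * (real l)\<^sup>2 / ((real l - 2) * \<beta> ^ (l - 3))"
    using split(2) pos by (intro divide_right_mono mult_right_mono) auto
  also have "\<dots> = (4 * r * (real l)\<^sup>2 * \<beta> ^ 3) / (((real l - 2) * \<beta> ^ (l - 3)) * \<beta> ^ 3)"
    using \<beta> by simp
  also have "\<beta> ^ l = \<beta> ^ 3 * \<beta> ^ (l - 3)" using l by (simp flip: power_add)
  then have "(4 * r * (real l)\<^sup>2 * \<beta> ^ 3) / (((real l - 2) * \<beta> ^ (l - 3)) * \<beta> ^ 3)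
      = 4 * \<beta> ^ 3 * r * (real l)\<^sup>2 / ((real l - 2) * \<beta> ^ l)"
    by (simp only: mult_ac)
  finally have t3: "4 * real a * (real l)\<^sup>2 / ((real l - 2) * \<beta> ^ (l - 3))
      \<le> 4 * \<beta> ^ 3 * r * (real l)\<^sup>2 / ((real l - 2) * \<beta> ^ l)" .
  show ?thesis
    using t1 t2 t3 unfolding swap_miss_bound_def a_def b_def by linarith
qed

text \<open>The number of relators is \<open>\<beta>\<^bsup>l/2\<^esup> log\<^sub>\<beta> l \<cdot> l\<^sup>-\<^sup>1\<^sup>/\<^sup>4\<close>, rounded down.\<close>

lemma swap_miss_bound_half_split_tendsto_0:
  fixes \<beta> :: real and N :: "nat \<Rightarrow> nat"
  assumes \<beta>: "\<beta> > 1"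
    and N: "eventually (\<lambda>l. N l = nat \<lfloor>exp (ln \<beta> * real l / 2) * (ln (real l) / ln \<beta>)
              * real l powr (-1/4)\<rfloor>) sequentially"
  shows "(\<lambda>l. swap_miss_bound \<beta> l (N l div 2) (N l - N l div 2)) \<longlonglongrightarrow> 0"
    and "eventually (\<lambda>l. N l div 2 \<ge> 1) sequentially"
proof -
  define c where "c = ln \<beta>"
  define r where "r l = exp (c * real l / 2) * (ln (real l) / c) * real l powr (-1/4)" for l :: nat
  have c: "c > 0" using \<beta> by (simp add: c_def)
  have \<beta>_power: "\<beta> ^ l = exp (c * real l)" for l
    using \<beta> exp_of_nat_mult[of l c] by (simp add: c_def mult.commute)
  have "filterlim r at_top sequentially" unfolding r_def using c by real_asymp
  then have "eventually (\<lambda>l. r l \<ge> 4) sequentially" by (simp add: filterlim_at_top)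
  then have ev: "eventually (\<lambda>l. r l \<ge> 4 \<and> l \<ge> 3 \<and> r l - 1 \<le> real (N l) \<and> real (N l) \<le> r l)
      sequentially"
    using N eventually_ge_at_top[of 3]
  proof eventually_elim
    case (elim l)
    then have "real (N l) = of_int \<lfloor>r l\<rfloor>" by (simp add: r_def c_def)
    then show ?case using elim by linarith
  qed
  define K where "K = 1 / (44 * (\<beta> + 1)\<^sup>2 * \<beta>)"
  have K: "K > 0" using \<beta> by (simp add: K_def)
  let ?U = "\<lambda>l. exp (- (K * ((r l)\<^sup>2 * (real l - 2) / exp (c * real l))))
       + 16 * (\<beta> + 1) * \<beta>\<^sup>2 * (real l / (r l * (real l - 2)))
       + 4 * \<beta> ^ 3 * (r l * (real l)\<^sup>2 / ((real l - 2) * exp (c * real l)))"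
  have "(\<lambda>l. exp (- (K * ((r l)\<^sup>2 * (real l - 2) / exp (c * real l))))) \<longlonglongrightarrow> 0"
    unfolding r_def using c K by real_asymp
  moreover have "(\<lambda>l. real l / (r l * (real l - 2))) \<longlonglongrightarrow> 0"
    unfolding r_def using c by real_asymp
  moreover have "(\<lambda>l. r l * (real l)\<^sup>2 / ((real l - 2) * exp (c * real l))) \<longlonglongrightarrow> 0"
    unfolding r_def using c by real_asymp
  ultimately have "?U \<longlonglongrightarrow> 0 + 16 * (\<beta> + 1) * \<beta>\<^sup>2 * 0 + 4 * \<beta> ^ 3 * 0"
    by (intro tendsto_intros)
  then have U: "?U \<longlonglongrightarrow> 0" by simp
  have nonneg: "eventually (\<lambda>l. 0 \<le> swap_miss_bound \<beta> l (N l div 2) (N l - N l div 2)) sequentially"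
    using ev by eventually_elim (use \<beta> swap_miss_bound_nonneg in auto)
  have bound: "eventually (\<lambda>l. swap_miss_bound \<beta> l (N l div 2) (N l - N l div 2) \<le> ?U l) sequentially"
    using ev
  proof eventually_elim
    case (elim l)
    have "(r l)\<^sup>2 * (real l - 2) / (44 * (\<beta> + 1)\<^sup>2 * \<beta> * exp (c * real l))
        = K * ((r l)\<^sup>2 * (real l - 2) / exp (c * real l))"
      by (simp add: K_def)
    then show ?case
      using swap_miss_bound_half_split_le[of \<beta> l "r l" "N l"] elim \<beta> by (simp add: \<beta>_power[of l])
  qed
  show "(\<lambda>l. swap_miss_bound \<beta> l (N l div 2) (N l - N l div 2)) \<longlonglongrightarrow> 0"
    using tendsto_sandwich[OF nonneg bound tendsto_const U] .
  show "eventually (\<lambda>l. N l div 2 \<ge> 1) sequentially"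
    using ev by eventually_elim linarith
qed

lemma relator_count_powr_eq:
  fixes \<beta> x :: real assumes \<beta>: "\<beta> > 1" and x: "x > 1"
  shows "\<beta> powr (x * (1/2 - (log \<beta> x / (4 * x) - log \<beta> (log \<beta> x) / x)))
       = exp (ln \<beta> * x / 2) * (ln x / ln \<beta>) * x powr (-1/4)"
proof -
  define L where "L = ln x / ln \<beta>"
  have L: "L > 0" using x \<beta> by (simp add: L_def)
  have log: "log \<beta> x = L" "log \<beta> L = ln L / ln \<beta>" by (simp_all add: log_def L_def)
  have "x * (1/2 - (L / (4 * x) - ln L / ln \<beta> / x)) = x / 2 - L / 4 + ln L / ln \<beta>"
    using x by (simp add: field_simps)
  moreover have "(x / 2 - L / 4 + ln L / ln \<beta>) * ln \<beta> = ln \<beta> * x / 2 + (-1/4) * ln x + ln L"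
    using \<beta> by (simp add: L_def field_simps)
  ultimately have e: "x * (1/2 - (log \<beta> x / (4 * x) - log \<beta> (log \<beta> x) / x)) * ln \<beta>
      = ln \<beta> * x / 2 + (-1/4) * ln x + ln L"
    unfolding log by simp
  have "\<beta> powr (x * (1/2 - (log \<beta> x / (4 * x) - log \<beta> (log \<beta> x) / x)))
      = exp (ln \<beta> * x / 2) * exp ((-1/4) * ln x) * exp (ln L)"
    using \<beta> unfolding powr_def e by (simp only: exp_add) simp
  also have "\<dots> = exp (ln \<beta> * x / 2) * (ln x / ln \<beta>) * x powr (-1/4)"
    using x L by (simp add: powr_def L_def)
  finally show ?thesis .
qed

lemma log_ratio_eq:
  fixes \<beta> x :: real assumes \<beta>: "\<beta> > 1" and x: "x > 1"
  defines "k \<equiv> (1/2) * log \<beta> x - log \<beta> (log \<beta> x)"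
  shows "(x - 2) / ((2 * k + 2) * \<beta> powr (2 * k))
       = (x - 2) * (ln x / ln \<beta>)\<^sup>2 / ((ln x / ln \<beta> - 2 * ln (ln x / ln \<beta>) / ln \<beta> + 2) * x)"
proof -
  define L where "L = ln x / ln \<beta>"
  have L: "L > 0" using x \<beta> by (simp add: L_def)
  have k: "k = L / 2 - ln L / ln \<beta>" by (simp add: k_def log_def L_def)
  have "\<beta> powr (2 * k) = exp (2 * k * ln \<beta>)"
    using \<beta> by (simp add: powr_def)
  also have "2 * k * ln \<beta> = ln x - 2 * ln L"
    using \<beta> by (simp add: k left_diff_distrib L_def)
  also have "exp (ln x - 2 * ln L) = x / L\<^sup>2"
  proof -
    have "exp (2 * ln L) = L\<^sup>2" using L by (simp only: mult_2 exp_add exp_ln power2_eq_square)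
    then show ?thesis using x by (simp add: exp_diff)
  qed
  finally have "\<beta> powr (2 * k) = x / L\<^sup>2" .
  then have "(x - 2) / ((2 * k + 2) * \<beta> powr (2 * k)) = (x - 2) * L\<^sup>2 / ((2 * k + 2) * x)"
    by (simp only: times_divide_eq_right divide_divide_eq_right)
  then show ?thesis by (simp add: k L_def)
qed

section \<open>The random group collapses\<close>

text \<open>
  A swap \<open>z x z \<mapsto> z y z\<close> between two relators identifies \<open>a\<^sub>i\<close> with \<open>a\<^sub>0\<close> for
  \<open>0 < i\<close>, and \<open>a\<^sub>0\<close> with \<open>a\<^sub>0\<^sup>-\<^sup>1\<close> for \<open>i = 0\<close>.
\<close>

definition collapse_x :: "nat \<Rightarrow> letter" where
  "collapse_x i = (0, True)"

definition collapse_y :: "nat \<Rightarrow> letter" where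
  "collapse_y i = (if i = 0 then (0, False) else (i, True))"

definition collapse_z :: "nat \<Rightarrow> letter" where
  "collapse_z i = (if i = 0 then (1, True) else (0, True))"

lemma swap_triple_collapse:
  "m \<ge> 2 \<Longrightarrow> i < m \<Longrightarrow> swap_triple m (collapse_x i) (collapse_y i) (collapse_z i)"
  by unfold_locales (auto simp: collapse_x_def collapse_y_def collapse_z_def letters_def inv_letter_def)

abbreviation collapse_hits :: "nat \<Rightarrow> nat \<Rightarrow> letter list list \<Rightarrow> bool" where
  "collapse_hits i a rs \<equiv> hits (middle_swaps (collapse_x i) (collapse_y i) (collapse_z i)) a rs"

lemma pres_group_trivial_or_Z2_if_collapse_hits:
  assumes m: "m \<ge> 2" and rs: "set rs \<subseteq> reduced_words m l" and hits: "\<And>i. i < m \<Longrightarrow> collapse_hits i a rs"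
  shows "pres_group m (set rs) \<cong> singleton_group (undefined::int)
       \<or> pres_group m (set rs) \<cong> integer_mod_group 2"
proof -
  have rel: "([collapse_x i], [collapse_y i]) \<in> pres_rel m (set rs)" if i: "i < m" for i
  proof -
    interpret swap_triple m "collapse_x i" "collapse_y i" "collapse_z i"
      using swap_triple_collapse[OF m i] .
    obtain u v where uv: "u \<in> set rs" "v \<in> set rs"
      "v \<in> middle_swaps (collapse_x i) (collapse_y i) (collapse_z i) u"
      using hits[OF i] unfolding hits_def by (meson in_set_dropD in_set_takeD)
    obtain U V where UV: "u = U @ [collapse_x i] @ V" "v = U @ [collapse_y i] @ V"
      using middle_swaps_decomp[OF uv(3)] .
    have "set u \<subseteq> letters m" "set v \<subseteq> letters m" using uv rs by (auto simp: reduced_words_def)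
    then show ?thesis
      using pres_rel_swapped_relators[of U "collapse_x i" V "set rs" "collapse_y i" m] uv UV by simp
  qed
  have "([(i, True)], [(0, True)]) \<in> pres_rel m (set rs)" if "i < m" for i
  proof (cases "i = 0")
    case True then show ?thesis using m by (auto intro: pres_rel.refl simp: letters_def)
  next
    case False then show ?thesis
      using rel[OF that] by (auto simp: collapse_x_def collapse_y_def intro: pres_rel.sym)
  qed
  moreover have "([(0, True)], [(0, False)]) \<in> pres_rel m (set rs)"
    using rel[of 0] m by (simp add: collapse_x_def collapse_y_def)
  ultimately show ?thesis using pres_group_trivial_or_Z2[OF m] by blast
qed

lemma random_group_prob_trivial_or_Z2_ge:
  assumes m: "m \<ge> 2" and l: "l \<ge> 3" and a: "a \<ge> 1" and N: "num_relators m f l = a + b"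
  shows "random_group_prob m f (\<lambda>G. G \<cong> singleton_group (undefined::int) \<or> G \<cong> integer_mod_group 2) l
     \<ge> 1 - real m * swap_miss_bound (real (2 * m - 1)) l a b"
proof -
  let ?P = "\<lambda>G. G \<cong> singleton_group (undefined::int) \<or> G \<cong> integer_mod_group 2"
  let ?T = "tuples (reduced_words m l) (a + b)"
  let ?Good = "{rs. ?P (pres_group m (set rs))}"
  let ?Bad = "\<lambda>i. {rs \<in> ?T. \<not> collapse_hits i a rs}"
  define B where "B = swap_miss_bound (real (2 * m - 1)) l a b"
  have fin: "finite ?T" by (rule finite_tuples[OF finite_reduced_words])
  have "card (reduced_words m l) > 0"
    using card_reduced_words_Suc[of m "l - 1"] l m by simp
  then have card_T: "card ?T > 0" by (simp add: card_tuples[OF finite_reduced_words])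
  have "relator_tuples m f l = pmf_of_set ?T"
    unfolding relator_tuples_def N tuples_def by (simp add: conj_commute)
  then have prob: "random_group_prob m f ?P l = real (card (?T \<inter> ?Good)) / real (card ?T)"
    unfolding random_group_prob_def using fin card_T by (simp add: measure_pmf_of_set card_gt_0_iff)
  have "?T - ?Good \<subseteq> (\<Union>i<m. ?Bad i)"
  proof
    fix rs assume rs: "rs \<in> ?T - ?Good"
    then have "\<not> (\<forall>i<m. collapse_hits i a rs)"
      using pres_group_trivial_or_Z2_if_collapse_hits[OF m, of rs l a] by (auto simp: tuples_def)
    then show "rs \<in> (\<Union>i<m. ?Bad i)" using rs by blast
  qed
  then have "card (?T - ?Good) \<le> card (\<Union>i<m. ?Bad i)"
    using fin by (intro card_mono) auto
  also have "\<dots> \<le> (\<Sum>i<m. card (?Bad i))"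
    by (rule card_UN_le) simp
  finally have "real (card (?T - ?Good)) \<le> (\<Sum>i<m. real (card (?Bad i)))"
    by (simp only: of_nat_le_iff flip: of_nat_sum)
  also have "\<dots> \<le> (\<Sum>i<m. real (card ?T) * B)"
  proof (intro sum_mono)
    fix i assume "i \<in> {..<m}"
    then interpret swap_triple m "collapse_x i" "collapse_y i" "collapse_z i"
      using swap_triple_collapse[OF m] by simp
    show "real (card (?Bad i)) \<le> real (card ?T) * B"
      using card_tuples_not_hits_middle_swaps_le[OF l a, of b]
      by (simp add: B_def card_tuples[OF finite_reduced_words])
  qed
  finally have bad: "real (card (?T - ?Good)) \<le> real m * real (card ?T) * B" by simp
  have "card ?T = card (?T \<inter> ?Good) + card (?T - ?Good)"
    using fin by (rule card_Int_Diff)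
  then have "real (card ?T) - real m * real (card ?T) * B \<le> real (card (?T \<inter> ?Good))"
    using bad by simp
  then have "(real (card ?T) - real m * real (card ?T) * B) / real (card ?T)
      \<le> real (card (?T \<inter> ?Good)) / real (card ?T)"
    by (simp add: divide_right_mono)
  moreover have "(real (card ?T) - real m * real (card ?T) * B) / real (card ?T) = 1 - real m * B"
    using card_T by (simp add: field_simps)
  ultimately show ?thesis unfolding prob B_def by simp
qed

lemma random_group_prob_trivial_or_Z2_tendsto_1:
  assumes m: "m \<ge> 2"
    and N: "eventually (\<lambda>l. num_relators m f l = nat \<lfloor>exp (ln (2 * real m - 1) * real l / 2)
              * (ln (real l) / ln (2 * real m - 1)) * real l powr (-1/4)\<rfloor>) sequentially"
  shows "random_group_prob m f
      (\<lambda>G. G \<cong> singleton_group (undefined::int) \<or> G \<cong> integer_mod_group 2) \<longlonglongrightarrow> 1"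
proof -
  let ?P = "\<lambda>G. G \<cong> singleton_group (undefined::int) \<or> G \<cong> integer_mod_group 2"
  let ?N = "num_relators m f"
  let ?\<beta> = "2 * real m - 1"
  have \<beta>: "?\<beta> > 1" "real (2 * m - 1) = ?\<beta>" using m by (simp_all add: of_nat_diff)
  note bound = swap_miss_bound_half_split_tendsto_0[OF \<beta>(1) N]
  have lower: "eventually (\<lambda>l. 1 - real m * swap_miss_bound ?\<beta> l (?N l div 2) (?N l - ?N l div 2)
      \<le> random_group_prob m f ?P l) sequentially"
    using bound(2) eventually_ge_at_top[of 3]
  proof eventually_elim
    case (elim l)
    have "?N l = ?N l div 2 + (?N l - ?N l div 2)" by simp
    from random_group_prob_trivial_or_Z2_ge[OF m elim(2) elim(1) this] show ?case
      by (simp only: \<beta>(2))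
  qed
  have upper: "eventually (\<lambda>l. random_group_prob m f ?P l \<le> 1) sequentially"
    by (simp add: random_group_prob_def measure_pmf.prob_le_1)
  have "(\<lambda>l. 1 - real m * swap_miss_bound ?\<beta> l (?N l div 2) (?N l - ?N l div 2)) \<longlonglongrightarrow> 1"
    using tendsto_diff[OF tendsto_const tendsto_mult_right_zero[OF bound(1)]] by simp
  then show ?thesis using tendsto_sandwich[OF lower upper _ tendsto_const] by blast
qed

lemma filterlim_log_ratio_at_top:
  fixes \<beta> :: real
  assumes \<beta>: "\<beta> > 1"
  defines "k \<equiv> \<lambda>x. (1/2) * log \<beta> x - log \<beta> (log \<beta> x)"
  shows "filterlim (\<lambda>l::nat. (real l - 2) / ((2 * k (real l) + 2) * \<beta> powr (2 * k (real l))))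
      at_top sequentially"
proof -
  have "filterlim (\<lambda>l::nat. (real l - 2) * (ln (real l) / ln \<beta>)\<^sup>2
      / ((ln (real l) / ln \<beta> - 2 * ln (ln (real l) / ln \<beta>) / ln \<beta> + 2) * real l)) at_top sequentially"
    using \<beta> by real_asymp
  moreover have eq: "eventually (\<lambda>l::nat. (real l - 2) * (ln (real l) / ln \<beta>)\<^sup>2
      / ((ln (real l) / ln \<beta> - 2 * ln (ln (real l) / ln \<beta>) / ln \<beta> + 2) * real l)
      = (real l - 2) / ((2 * k (real l) + 2) * \<beta> powr (2 * k (real l)))) sequentially"
    using eventually_gt_at_top[of 1]
  proof eventually_elim
    case (elim l)
    then show ?case using log_ratio_eq[OF \<beta>, of "real l"] by (simp add: k_def)
  qed
  ultimately show ?thesis using filterlim_cong[OF HOL.refl HOL.refl eq] by simp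
qed

theorem corollary3p2:
  fixes m :: nat
  assumes "m \<ge> 2"
  defines "b \<equiv> 2 * real m - 1"
  defines "k \<equiv> (\<lambda>l::real. (1/2) * log b l - log b (log b l))"
  defines "f \<equiv> (\<lambda>l::real. log b l / (4 * l) - log b (log b l) / l)"
  shows "filterlim (\<lambda>l::nat. k (real l) - 2 * real l * f (real l)) at_top sequentially
       \<and> filterlim (\<lambda>l::nat. (real l - 2) / ((2 * k (real l) + 2) * b powr (2 * k (real l))))
           at_top sequentially
       \<and> (random_group_prob m f
            (\<lambda>G. G \<cong> singleton_group (undefined::int) \<or> G \<cong> integer_mod_group 2)
          \<longlonglongrightarrow> 1)"
proof -
  have b: "b > 1" "ln b > 0" using assms(1) by (simp_all add: b_def)
  have "filterlim (\<lambda>l::nat. k (real l) - 2 * real l * f (real l)) at_top sequentially"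
    unfolding k_def f_def log_def using b(2) by real_asymp
  moreover have "filterlim (\<lambda>l::nat. (real l - 2) / ((2 * k (real l) + 2) * b powr (2 * k (real l))))
      at_top sequentially"
    unfolding k_def by (rule filterlim_log_ratio_at_top[OF b(1)])
  moreover have "eventually (\<lambda>l. num_relators m f l = nat \<lfloor>exp (ln b * real l / 2)
      * (ln (real l) / ln b) * real l powr (-1/4)\<rfloor>) sequentially"
    using eventually_gt_at_top[of 1]
  proof eventually_elim
    case (elim l)
    have "num_relators m f l = nat \<lfloor>b powr (real l * (1/2 - f (real l)))\<rfloor>"
      unfolding num_relators_def b_def ..
    also have "b powr (real l * (1/2 - f (real l)))
        = exp (ln b * real l / 2) * (ln (real l) / ln b) * real l powr (-1/4)"
      unfolding f_def using relator_count_powr_eq[OF b(1), of "real l"] elim by simp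
    finally show ?case .
  qed
  ultimately show ?thesis
    using random_group_prob_trivial_or_Z2_tendsto_1[OF assms(1)] unfolding b_def by blast
qed

end
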